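(* Fix $T>0$, $C_0>0$ and $\gamma>0$, and suppose (A3), (A4) hold. On the event $\{\|\mathbf X\|_{op}\le C_0\}$ there is a constant $C>0$, depending on $T$, $C_0$ (and on $\beta,\delta$ and the constants in (A3)–(A4)) but not on $\gamma$ or on $n,d$, such that for every realization of the noise, $$\max_{0\le s\le t\le T/\gamma}\max_{j\in[d]}\Big[\big\|\partial_\varepsilon|_{\varepsilon=0}\boldsymbol\theta^{t,(s,j),\varepsilon}\big\|+\sqrt d\,\big\|\partial_\varepsilon|_{\varepsilon=0}\widehat\alpha^{t,(s,j),\varepsilon}\big\|\Big]\le C\gamma,$$ $$\max_{0\le s\le t\le T/\gamma}\max_{i\in[n]}\Big[\big\|\partial_\varepsilon|_{\varepsilon=0}\boldsymbol\theta^{t,[s,i],\varepsilon}\big\|+\sqrt d\,\big\|\partial_\varepsilon|_{\varepsilon=0}\widehat\alpha^{t,[s,i],\varepsilon}\big\|\Big]\le C\gamma,$$ where $s,t$ range over integers.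
   Context: (A3) $s:\mathbb R\times\mathbb R^K\to\mathbb R$ is $C^2$ with $|s(\theta,\alpha)|\le C(1+|\theta|+\|\alpha\|)$ and $\|\nabla_{(\theta,\alpha)}s\|_2,\|\nabla^2_{(\theta,\alpha)}s\|_{op}\le C$. (A4) $\mathcal G:\mathbb R^K\times\mathcal P_2(\mathbb R)\to\mathbb R^K$ satisfies $\|\mathcal G(\alpha,\mathsf P)\|\le C(1+\|\alpha\|+(\mathbb E_{\mathsf P}\theta^2)^{1/2})$, $\|\mathcal G(\alpha,\mathsf P)-\mathcal G(\alpha',\mathsf P')\|\le C(\|\alpha-\alpha'\|+W_2(\mathsf P,\mathsf P'))$, and with $\widehat{\mathsf P}(\boldsymbol\theta)=\frac1d\sum_j\delta_{\theta_j}$ each $(\boldsymbol\theta,\alpha)\mapsto\mathcal G_k(\alpha,\widehat{\mathsf P}(\boldsymbol\theta))$ is $C^2$ with $\|\nabla_\alpha\mathcal G_k\|\le C$, $\sqrt d\|\nabla_{\boldsymbol\theta}\mathcal G_k\|\le C$, $d\|\nabla^2_{\boldsymbol\theta}\mathcal G_k\|_{op}\le C$, $\sqrt d\|\nabla_{\boldsymbol\theta}\nabla_\alpha\mathcal G_k\|_{op}\le C$, $\|\nabla^2_\alpha\mathcal G_k\|_{op}\le C$, with $C$ independent of $d$. Here $\mathbf X\in\mathbb R^{n\times d}$, $\mathbf y\in\mathbb R^n$, $\beta\in\mathbb R$, with $n/d$ bounded. Perturbed discrete dynamics. For integer $s\ge0$, $j\in[d]$, $\varepsilon\in\mathbb R$: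 $\boldsymbol\theta^{t+1,(s,j),\varepsilon}=\boldsymbol\theta^{t,(s,j),\varepsilon}-\gamma[\beta\mathbf X^\top(\mathbf X\boldsymbol\theta^{t,(s,j),\varepsilon}-\mathbf y)-(s(\theta^{t,(s,j),\varepsilon}_k,\widehat\alpha^{t,(s,j),\varepsilon}))_k-\varepsilon\mathbf e_j\mathbf 1_{t=s}]+\sqrt2(\mathbf b^{t+1}-\mathbf b^t)$, $\widehat\alpha^{t+1,(s,j),\varepsilon}=\widehat\alpha^{t,(s,j),\varepsilon}+\gamma\mathcal G(\widehat\alpha^{t,(s,j),\varepsilon},\widehat{\mathsf P}(\boldsymbol\theta^{t,(s,j),\varepsilon}))$. For $i\in[n]$, $(\boldsymbol\theta^{t,[s,i],\varepsilon},\widehat\alpha^{t,[s,i],\varepsilon})$ is defined identically with $\varepsilon\mathbf e_j$ replaced by $\varepsilon\mathbf X^\top\mathbf e_i$. All start from the same initial condition $(\boldsymbol\theta^0,\widehat\alpha^0)$ and use the same noise $\mathbf b^t$ (with $\mathbf b^0=0$ and increments $\mathcal N(0,\gamma\mathbf I_d)$). Here $\mathbf e_j$ denotes the $j$-th standard basis vector. *)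

theory Defs
  imports "HOL-Probability.Probability"
begin

text \<open>Vectors of R^m are represented as functions nat => real whose coordinates
  outside {..<m} are zero; Euclidean norms are L2_set v {..<m}.\<close>

definition dvec :: "nat \<Rightarrow> (nat \<Rightarrow> real) set" where
  "dvec m = {v. \<forall>j\<ge>m. v j = 0}"

definition opn :: "nat set \<Rightarrow> nat set \<Rightarrow> (nat \<Rightarrow> nat \<Rightarrow> real) \<Rightarrow> real" where
  "opn R S A = Sup {L2_set (\<lambda>i. \<Sum>j\<in>S. A i j * v j) R | v. L2_set v S \<le> 1}"

definition C2_on :: "nat \<Rightarrow> ((nat \<Rightarrow> real) \<Rightarrow> real) \<Rightarrow> ((nat \<Rightarrow> real) \<Rightarrow> nat \<Rightarrow> real)
    \<Rightarrow> ((nat \<Rightarrow> real) \<Rightarrow> nat \<Rightarrow> nat \<Rightarrow> real) \<Rightarrow> bool" where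
  "C2_on m f Df D2f \<longleftrightarrow>
    (\<forall>x\<in>dvec m. \<forall>e>0. \<exists>r>0. \<forall>h\<in>dvec m. L2_set h {..<m} < r \<longrightarrow>
        \<bar>f (\<lambda>j. x j + h j) - f x - (\<Sum>j<m. Df x j * h j)\<bar> \<le> e * L2_set h {..<m}) \<and>
    (\<forall>x\<in>dvec m. \<forall>e>0. \<exists>r>0. \<forall>h\<in>dvec m. L2_set h {..<m} < r \<longrightarrow>
        L2_set (\<lambda>i. Df (\<lambda>j. x j + h j) i - Df x i - (\<Sum>j<m. D2f x i j * h j)) {..<m}
          \<le> e * L2_set h {..<m}) \<and>
    (\<forall>x\<in>dvec m. \<forall>e>0. \<exists>r>0. \<forall>h\<in>dvec m. L2_set h {..<m} < r \<longrightarrow>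
        opn {..<m} {..<m} (\<lambda>i j. D2f (\<lambda>j. x j + h j) i j - D2f x i j) \<le> e)"

definition P2 :: "real measure set" where
  "P2 = {P. prob_space P \<and> sets P = sets borel \<and> integrable P (\<lambda>x. x ^ 2)}"

definition couplings :: "real measure \<Rightarrow> real measure \<Rightarrow> (real \<times> real) measure set" where
  "couplings P Q = {\<pi>. prob_space \<pi> \<and> sets \<pi> = sets (borel \<Otimes>\<^sub>M borel) \<and>
      distr \<pi> borel fst = P \<and> distr \<pi> borel snd = Q}"

definition W2 :: "real measure \<Rightarrow> real measure \<Rightarrow> real" where
  "W2 P Q = sqrt (enn2real (INF \<pi>\<in>couplings P Q. \<integral>\<^sup>+ z. ennreal ((fst z - snd z) ^ 2) \<partial>\<pi>))"

definition emp :: "nat \<Rightarrow> (nat \<Rightarrow> real) \<Rightarrow> real measure" where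
  "emp d \<theta> = distr (uniform_count_measure {..<d}) borel \<theta>"

text \<open>Assumption (A3) with constant CA, K = dimension of alpha.
  The joint variable z in R^(1+K) has z 0 = theta, z (Suc k) = alpha_k.\<close>
definition A3 :: "nat \<Rightarrow> real \<Rightarrow> (real \<Rightarrow> (nat \<Rightarrow> real) \<Rightarrow> real) \<Rightarrow> bool" where
  "A3 K CA s \<longleftrightarrow>
    (\<forall>\<theta> \<alpha>. \<alpha> \<in> dvec K \<longrightarrow> \<bar>s \<theta> \<alpha>\<bar> \<le> CA * (1 + \<bar>\<theta>\<bar> + L2_set \<alpha> {..<K})) \<and>
    (\<exists>Ds D2s. C2_on (Suc K) (\<lambda>z. s (z 0) (\<lambda>k. if k < K then z (Suc k) else 0)) Ds D2s \<and>
       (\<forall>z\<in>dvec (Suc K). L2_set (Ds z) {..<Suc K} \<le> CA \<and>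
          opn {..<Suc K} {..<Suc K} (D2s z) \<le> CA))"

text \<open>Assumption (A4) with constant CA.  For dimension d the joint variable
  z in R^(d+K) has z j = theta_j (j<d) and z (d+k) = alpha_k (k<K).\<close>
definition A4 :: "nat \<Rightarrow> real \<Rightarrow> ((nat \<Rightarrow> real) \<Rightarrow> real measure \<Rightarrow> (nat \<Rightarrow> real)) \<Rightarrow> bool" where
  "A4 K CA G \<longleftrightarrow>
    (\<forall>\<alpha>\<in>dvec K. \<forall>P\<in>P2.
        L2_set (G \<alpha> P) {..<K} \<le> CA * (1 + L2_set \<alpha> {..<K} + sqrt (\<integral>x. x ^ 2 \<partial>P))) \<and>
    (\<forall>\<alpha>\<in>dvec K. \<forall>\<alpha>'\<in>dvec K. \<forall>P\<in>P2. \<forall>P'\<in>P2.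
        L2_set (\<lambda>k. G \<alpha> P k - G \<alpha>' P' k) {..<K}
          \<le> CA * (L2_set (\<lambda>k. \<alpha> k - \<alpha>' k) {..<K} + W2 P P')) \<and>
    (\<forall>d>0. \<forall>k<K. \<exists>DG D2G.
        C2_on (d + K) (\<lambda>z. G (\<lambda>k'. if k' < K then z (d + k') else 0)
                            (emp d (\<lambda>j. if j < d then z j else 0)) k) DG D2G \<and>
        (\<forall>z\<in>dvec (d + K).
           L2_set (DG z) {d..<d+K} \<le> CA \<and>
           sqrt (real d) * L2_set (DG z) {..<d} \<le> CA \<and>
           real d * opn {..<d} {..<d} (D2G z) \<le> CA \<and>
           sqrt (real d) * opn {..<d} {d..<d+K} (D2G z) \<le> CA \<and>
           opn {d..<d+K} {d..<d+K} (D2G z) \<le> CA))"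

text \<open>Perturbed discrete dynamics: perturbation eps * v added inside the bracket at
  step t = s0.  v = e_j gives the (s,j) dynamics, v = X^T e_i gives the [s,i] dynamics.
  Returns (theta^t, alpha^t).\<close>
fun dyn :: "nat \<Rightarrow> (real \<Rightarrow> (nat \<Rightarrow> real) \<Rightarrow> real) \<Rightarrow> ((nat \<Rightarrow> real) \<Rightarrow> real measure \<Rightarrow> (nat \<Rightarrow> real))
    \<Rightarrow> real \<Rightarrow> real \<Rightarrow> nat \<Rightarrow> nat \<Rightarrow> (nat \<Rightarrow> nat \<Rightarrow> real) \<Rightarrow> (nat \<Rightarrow> real)
    \<Rightarrow> (nat \<Rightarrow> real) \<Rightarrow> (nat \<Rightarrow> real) \<Rightarrow> (nat \<Rightarrow> nat \<Rightarrow> real)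
    \<Rightarrow> (nat \<Rightarrow> real) \<Rightarrow> nat \<Rightarrow> real \<Rightarrow> nat \<Rightarrow> (nat \<Rightarrow> real) \<times> (nat \<Rightarrow> real)" where
  "dyn K s G \<beta> \<gamma> d n X y \<theta>0 \<alpha>0 b v s0 \<epsilon> 0 = (\<theta>0, \<alpha>0)"
| "dyn K s G \<beta> \<gamma> d n X y \<theta>0 \<alpha>0 b v s0 \<epsilon> (Suc t) =
    (let (\<theta>, \<alpha>) = dyn K s G \<beta> \<gamma> d n X y \<theta>0 \<alpha>0 b v s0 \<epsilon> t in
     ((\<lambda>j. if j < d then
             \<theta> j - \<gamma> * (\<beta> * (\<Sum>i<n. X i j * ((\<Sum>l<d. X i l * \<theta> l) - y i))
                        - s (\<theta> j) \<alpha> - (if t = s0 then \<epsilon> * v j else 0))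
             + sqrt 2 * (b (Suc t) j - b t j)
           else 0),
      (\<lambda>k. if k < K then \<alpha> k + \<gamma> * G \<alpha> (emp d \<theta>) k else 0)))"

end

theory Submission
  imports Defs
begin

(* Differentiating the recursion at eps = 0 gives a linear recursion for the tangent vector
   (d theta^t, d alpha^t). It vanishes up to step s, where the perturbation enters once with
   size gamma ||v|| (v = e_j, or v = X^T e_i with ||v|| <= ||X||_op), and every later step
   multiplies the weighted norm ||d theta|| + sqrt d ||d alpha|| by at most 1 + gamma L, where
   L = |beta| C0^2 + (1 + sqrt K) CA. The weight sqrt d is what makes (A4) dimension-free:
   the theta-gradient of G has norm at most CA / sqrt d, while the alpha-dependence of the d
   score terms contributes CA sqrt d ||d alpha|| in l2. Since t <= T / gamma, the norm stays
   below gamma ||v|| (1 + gamma L)^t <= gamma ||v|| exp (L T). *)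

lemma L2_set_abs [simp]: "L2_set (\<lambda>i. \<bar>f i\<bar>) A = L2_set f A"
  unfolding L2_set_def by simp

lemma L2_set_cmult: "L2_set (\<lambda>i. c * f i) A = \<bar>c\<bar> * L2_set f A"
proof -
  have "L2_set (\<lambda>i. c * f i) A = L2_set (\<lambda>i. \<bar>c\<bar> * \<bar>f i\<bar>) A"
    unfolding L2_set_def by (simp add: power_mult_distrib)
  also have "\<dots> = \<bar>c\<bar> * L2_set f A"
    using L2_set_right_distrib[of "\<bar>c\<bar>" "\<lambda>i. \<bar>f i\<bar>" A] by simp
  finally show ?thesis .
qed

lemma abs_sum_mult_le_L2_set: "\<bar>\<Sum>i\<in>A. f i * g i\<bar> \<le> L2_set f A * L2_set g A"
  by (rule order_trans[OF sum_abs]) (simp add: abs_mult L2_set_mult_ineq)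

lemma L2_set_le_const:
  assumes "\<And>i. i \<in> A \<Longrightarrow> \<bar>f i\<bar> \<le> c" and "0 \<le> c"
  shows "L2_set f A \<le> sqrt (card A) * c"
proof -
  have "L2_set (\<lambda>i. \<bar>f i\<bar>) A \<le> L2_set (\<lambda>i. c) A"
    using assms(1) by (intro L2_set_mono) auto
  then show ?thesis using assms(2) by (simp add: L2_set_constant)
qed

lemma L2_set_shift: "L2_set (f :: nat \<Rightarrow> real) {d..<d + K} = L2_set (\<lambda>k. f (d + k)) {..<K}"
  unfolding L2_set_def
  using sum.shift_bounds_nat_ivl[of "\<lambda>j. (f j)\<^sup>2" 0 d K]
  by (simp add: atLeast0LessThan add.commute)

lemma L2_set_case_nat_le:
  "L2_set (case_nat x f) {..<Suc K} \<le> \<bar>x\<bar> + L2_set f {..<K}"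
proof -
  have "L2_set (case_nat x f) {..<Suc K} = sqrt (x\<^sup>2 + (L2_set f {..<K})\<^sup>2)"
    unfolding L2_set_def by (simp add: sum.lessThan_Suc_shift sum_nonneg del: sum.lessThan_Suc)
  also have "\<dots> \<le> \<bar>x\<bar> + \<bar>L2_set f {..<K}\<bar>"
    by (rule sqrt_sum_squares_le_sum_abs)
  finally show ?thesis by simp
qed

lemma abs_sum_block_mult_le:
  fixes d K :: nat
  shows "\<bar>\<Sum>j<d + K. a j * (if j < d then x j else y (j - d))\<bar>
    \<le> L2_set a {..<d} * L2_set x {..<d} + L2_set a {d..<d + K} * L2_set y {..<K}"
proof -
  have split: "(\<Sum>j<d + K. f j) = (\<Sum>j<d. f j) + (\<Sum>j\<in>{d..<d + K}. f j)" for f :: "nat \<Rightarrow> real"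
    using sum.union_disjoint[of "{..<d}" "{d..<d + K}" f]
    by (simp add: ivl_disj_un_one(2) ivl_disj_int_one(2))
  have "(\<Sum>j<d + K. a j * (if j < d then x j else y (j - d)))
      = (\<Sum>j<d. a j * (if j < d then x j else y (j - d))) + (\<Sum>j\<in>{d..<d + K}. a j * (if j < d then x j else y (j - d)))"
    by (rule split)
  also have "\<dots> = (\<Sum>j<d. a j * x j) + (\<Sum>j\<in>{d..<d + K}. a j * y (j - d))"
    by (intro arg_cong2[where f = "(+)"] sum.cong) auto
  also have "\<bar>\<dots>\<bar> \<le> L2_set a {..<d} * L2_set x {..<d} + L2_set a {d..<d + K} * L2_set (\<lambda>j. y (j - d)) {d..<d + K}"
    by (rule order_trans[OF abs_triangle_ineq add_mono[OF abs_sum_mult_le_L2_set abs_sum_mult_le_L2_set]])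
  also have "L2_set (\<lambda>j. y (j - d)) {d..<d + K} = L2_set y {..<K}"
    by (simp add: L2_set_shift)
  finally show ?thesis .
qed

lemma L2_set_unit_vector:
  assumes "finite A" "j \<in> A"
  shows "L2_set (\<lambda>l. if l = j then 1 else 0) A = 1"
proof -
  have "(\<Sum>l\<in>A. (if l = j then 1 else 0 :: real)\<^sup>2) = (\<Sum>l\<in>A. if l = j then 1 else 0)"
    by (rule sum.cong) auto
  then show ?thesis using assms by (simp add: L2_set_def)
qed

lemma opn_upper:
  assumes "finite S" and "L2_set v S \<le> 1"
  shows "L2_set (\<lambda>i. \<Sum>j\<in>S. A i j * v j) R \<le> opn R S A"
proof -
  let ?Av = "\<lambda>v. L2_set (\<lambda>i. \<Sum>j\<in>S. A i j * v j) R"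
  have Av_le: "?Av w \<le> L2_set w S * L2_set (\<lambda>i. L2_set (A i) S) R" for w
  proof -
    have "?Av w \<le> L2_set (\<lambda>i. L2_set (A i) S * L2_set w S) R"
      by (subst L2_set_abs[symmetric], rule L2_set_mono) (auto simp: abs_sum_mult_le_L2_set)
    then show ?thesis by (simp add: L2_set_cmult mult.commute)
  qed
  have "?Av w \<le> L2_set (\<lambda>i. L2_set (A i) S) R" if "L2_set w S \<le> 1" for w
    using Av_le[of w] mult_right_mono[OF that, of "L2_set (\<lambda>i. L2_set (A i) S) R"] by simp
  then have "bdd_above {?Av w | w. L2_set w S \<le> 1}"
    by (intro bdd_aboveI) blast
  with assms(2) show ?thesis
    unfolding opn_def by (intro cSup_upper) auto
qed

lemma opn_nonneg: "finite S \<Longrightarrow> 0 \<le> opn R S A"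
  using opn_upper[of S "\<lambda>_. 0"] by (simp add: L2_set_def)

lemma opn_mult_le:
  assumes "finite S"
  shows "L2_set (\<lambda>i. \<Sum>j\<in>S. A i j * v j) R \<le> opn R S A * L2_set v S"
proof (cases "L2_set v S = 0")
  case True
  then have "\<forall>j\<in>S. v j = 0" using assms by (simp add: L2_set_eq_0_iff)
  then show ?thesis by (simp add: L2_set_def)
next
  case False
  define c where "c = L2_set v S"
  have c: "c > 0" using False by (simp add: c_def order_le_neq_trans)
  have "L2_set (\<lambda>i. \<Sum>j\<in>S. A i j * (inverse c * v j)) R \<le> opn R S A"
    using assms c by (intro opn_upper) (simp_all add: L2_set_cmult c_def)
  moreover have "L2_set (\<lambda>i. \<Sum>j\<in>S. A i j * (inverse c * v j)) R = L2_set (\<lambda>i. \<Sum>j\<in>S. A i j * v j) R / c"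
    using c by (simp add: mult.left_commute[of _ "inverse c"] L2_set_cmult divide_inverse
        mult.commute flip: sum_distrib_left)
  ultimately show ?thesis using c by (simp add: c_def field_simps)
qed

lemma opn_transpose_mult_le:
  assumes "finite R" "finite S"
  shows "L2_set (\<lambda>j. \<Sum>i\<in>R. A i j * u i) S \<le> opn R S A * L2_set u R"
proof -
  define w where "w j = (\<Sum>i\<in>R. A i j * u i)" for j
  have "(L2_set w S)\<^sup>2 = (\<Sum>j\<in>S. w j * w j)"
    unfolding L2_set_def by (simp add: sum_nonneg power2_eq_square)
  also have "\<dots> = (\<Sum>i\<in>R. u i * (\<Sum>j\<in>S. A i j * w j))"
    unfolding w_def
    by (simp add: sum_distrib_left sum_distrib_right mult_ac sum.swap[of _ S R])
  also have "\<dots> \<le> L2_set u R * L2_set (\<lambda>i. \<Sum>j\<in>S. A i j * w j) R"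
    using abs_sum_mult_le_L2_set by (rule abs_le_D1)
  also have "\<dots> \<le> L2_set u R * (opn R S A * L2_set w S)"
    using opn_mult_le[OF assms(2)] by (rule mult_left_mono) simp
  finally have "L2_set w S * L2_set w S \<le> L2_set w S * (opn R S A * L2_set u R)"
    by (simp add: power2_eq_square mult_ac)
  then show ?thesis
    using opn_nonneg[OF assms(2), of R A] unfolding w_def[symmetric]
    by (cases "L2_set w S = 0") (simp_all add: order_le_neq_trans)
qed

lemma L2_set_row_le_opn:
  assumes "i \<in> R" "finite R" "finite S"
  shows "L2_set (A i) S \<le> opn R S A"
proof -
  have "(\<lambda>j. \<Sum>i'\<in>R. A i' j * (if i' = i then 1 else 0)) = A i"
    using assms(1,2) by (simp add: if_distrib[of "\<lambda>x. _ * x"] cong: if_cong)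
  moreover have "L2_set (\<lambda>i'. if i' = i then 1 else 0) R = 1"
    using assms(2,1) by (rule L2_set_unit_vector)
  ultimately show ?thesis
    using opn_transpose_mult_le[OF assms(2,3), of A "\<lambda>i'. if i' = i then 1 else 0"] by simp
qed

definition has_gradient_at ::
    "nat \<Rightarrow> ((nat \<Rightarrow> real) \<Rightarrow> real) \<Rightarrow> (nat \<Rightarrow> real) \<Rightarrow> (nat \<Rightarrow> real) \<Rightarrow> bool" where
  "has_gradient_at m f D x \<longleftrightarrow>
    (\<forall>e>0. \<exists>r>0. \<forall>h\<in>dvec m. L2_set h {..<m} < r \<longrightarrow>
        \<bar>f (\<lambda>j. x j + h j) - f x - (\<Sum>j<m. D j * h j)\<bar> \<le> e * L2_set h {..<m})"

lemma C2_on_has_gradient_at: "C2_on m f Df D2f \<Longrightarrow> x \<in> dvec m \<Longrightarrow> has_gradient_at m f (Df x) x"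
  unfolding C2_on_def has_gradient_at_def by blast

lemma L2_set_increment_tendsto:
  assumes deriv: "\<And>j. j < m \<Longrightarrow> ((\<lambda>\<epsilon>. g \<epsilon> j) has_real_derivative g' j) (at 0)"
  shows "((\<lambda>\<epsilon>. L2_set (\<lambda>j. g \<epsilon> j - g 0 j) {..<m}) \<longlongrightarrow> 0) (at 0)"
    and "((\<lambda>\<epsilon>. L2_set (\<lambda>j. g \<epsilon> j - g 0 j) {..<m} / \<bar>\<epsilon>\<bar>) \<longlongrightarrow> L2_set g' {..<m}) (at 0)"
proof -
  define h where "h \<epsilon> = (\<lambda>j. g \<epsilon> j - g 0 j)" for \<epsilon>
  have "((\<lambda>\<epsilon>. h \<epsilon> j) \<longlongrightarrow> 0) (at 0)" if "j < m" for j
    using DERIV_isCont[OF deriv[OF that]] by (simp add: isCont_def LIM_zero h_def)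
  then have "((\<lambda>\<epsilon>. L2_set (h \<epsilon>) {..<m}) \<longlongrightarrow> 0) (at 0)"
    unfolding L2_set_def by (auto intro!: tendsto_eq_intros)
  then show "((\<lambda>\<epsilon>. L2_set (\<lambda>j. g \<epsilon> j - g 0 j) {..<m}) \<longlongrightarrow> 0) (at 0)"
    by (simp add: h_def)
  have "((\<lambda>\<epsilon>. (g \<epsilon> j - g 0 j) / \<epsilon>) \<longlongrightarrow> g' j) (at 0)" if "j < m" for j
    using deriv[OF that] by (simp add: has_field_derivative_iff)
  then have "((\<lambda>\<epsilon>. L2_set (\<lambda>j. (g \<epsilon> j - g 0 j) / \<epsilon>) {..<m}) \<longlongrightarrow> L2_set g' {..<m}) (at 0)"
    unfolding L2_set_def by (intro tendsto_intros) simp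
  moreover have "L2_set (\<lambda>j. (g \<epsilon> j - g 0 j) / \<epsilon>) {..<m} = L2_set (\<lambda>j. g \<epsilon> j - g 0 j) {..<m} / \<bar>\<epsilon>\<bar>"
    for \<epsilon> using L2_set_cmult[of "inverse \<epsilon>" "\<lambda>j. g \<epsilon> j - g 0 j"] by (simp add: divide_inverse mult.commute)
  ultimately show "((\<lambda>\<epsilon>. L2_set (\<lambda>j. g \<epsilon> j - g 0 j) {..<m} / \<bar>\<epsilon>\<bar>) \<longlongrightarrow> L2_set g' {..<m}) (at 0)"
    by simp
qed

lemma DERIV_gradient_chain:
  assumes grad: "has_gradient_at m f D (g 0)"
    and curve: "\<And>\<epsilon>. g \<epsilon> \<in> dvec m"
    and deriv: "\<And>j. j < m \<Longrightarrow> ((\<lambda>\<epsilon>. g \<epsilon> j) has_real_derivative g' j) (at 0)"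
  shows "((\<lambda>\<epsilon>. f (g \<epsilon>)) has_real_derivative (\<Sum>j<m. D j * g' j)) (at 0)"
proof -
  define h where "h \<epsilon> = (\<lambda>j. g \<epsilon> j - g 0 j)" for \<epsilon>
  define R where "R \<epsilon> = f (g \<epsilon>) - f (g 0) - (\<Sum>j<m. D j * h \<epsilon> j)" for \<epsilon>
  have h_dvec: "h \<epsilon> \<in> dvec m" for \<epsilon>
    using curve[of \<epsilon>] curve[of 0] by (simp add: dvec_def h_def)
  have "((\<lambda>\<epsilon>. R \<epsilon> / \<epsilon>) \<longlongrightarrow> 0) (at 0)"
  proof (rule tendstoI)
    fix e :: real
    assume "e > 0"
    define M where "M = L2_set g' {..<m} + 1"
    have "M > 0" and "L2_set g' {..<m} < M" by (simp_all add: M_def add_nonneg_pos)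
    with grad \<open>e > 0\<close> obtain r where "r > 0" and r: "\<And>h. h \<in> dvec m \<Longrightarrow> L2_set h {..<m} < r \<Longrightarrow>
        \<bar>f (\<lambda>j. g 0 j + h j) - f (g 0) - (\<Sum>j<m. D j * h j)\<bar> \<le> e / M * L2_set h {..<m}"
      unfolding has_gradient_at_def by (metis divide_pos_pos)
    have "eventually (\<lambda>\<epsilon>. L2_set (h \<epsilon>) {..<m} / \<bar>\<epsilon>\<bar> < M) (at 0)"
      using L2_set_increment_tendsto(2)[OF deriv] \<open>L2_set g' {..<m} < M\<close> unfolding h_def
      by (rule order_tendstoD)
    moreover have "eventually (\<lambda>\<epsilon>. L2_set (h \<epsilon>) {..<m} < r) (at 0)"
      using L2_set_increment_tendsto(1)[OF deriv] \<open>r > 0\<close> unfolding h_def by (rule order_tendstoD)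
    moreover have "eventually (\<lambda>\<epsilon>. \<epsilon> \<noteq> 0) (at (0::real))"
      by (simp add: eventually_at_filter)
    ultimately show "eventually (\<lambda>\<epsilon>. dist (R \<epsilon> / \<epsilon>) 0 < e) (at 0)"
    proof eventually_elim
      case (elim \<epsilon>)
      have "(\<lambda>j. g 0 j + h \<epsilon> j) = g \<epsilon>" by (simp add: h_def)
      then have "\<bar>R \<epsilon>\<bar> \<le> e / M * L2_set (h \<epsilon>) {..<m}"
        using r[OF h_dvec elim(2)] by (simp add: R_def)
      also have "\<dots> < e / M * (M * \<bar>\<epsilon>\<bar>)"
        using elim \<open>e > 0\<close> \<open>M > 0\<close> by (simp add: pos_divide_less_eq mult.commute)
      finally show ?case using \<open>M > 0\<close> elim(3) by (simp add: abs_divide pos_divide_less_eq)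
    qed
  qed
  then have "(R has_real_derivative 0) (at 0)"
    by (simp add: has_field_derivative_iff R_def h_def)
  moreover have "((\<lambda>\<epsilon>. f (g 0) + (\<Sum>j<m. D j * h \<epsilon> j)) has_real_derivative (\<Sum>j<m. D j * g' j)) (at 0)"
    unfolding h_def by (auto intro!: derivative_eq_intros deriv simp: mult.commute)
  ultimately have "((\<lambda>\<epsilon>. R \<epsilon> + (f (g 0) + (\<Sum>j<m. D j * h \<epsilon> j)))
      has_real_derivative 0 + (\<Sum>j<m. D j * g' j)) (at 0)"
    by (rule DERIV_add)
  then show ?thesis by (simp add: R_def)
qed

lemma A3_nonneg:
  assumes "A3 K CA s"
  shows "0 \<le> CA"
proof -
  have "(\<lambda>_. 0) \<in> dvec K" by (simp add: dvec_def)
  then have "\<bar>s 0 (\<lambda>_. 0)\<bar> \<le> CA * (1 + \<bar>0\<bar> + L2_set (\<lambda>_. 0) {..<K})"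
    using assms unfolding A3_def by blast
  then show ?thesis by (simp add: L2_set_def)
qed

lemma A3_DERIV_score:
  assumes "A3 K CA s"
    and curve: "\<And>\<epsilon>. \<alpha> \<epsilon> \<in> dvec K"
    and d\<theta>: "(\<theta> has_real_derivative D\<theta>) (at 0)"
    and d\<alpha>: "\<And>k. k < K \<Longrightarrow> ((\<lambda>\<epsilon>. \<alpha> \<epsilon> k) has_real_derivative D\<alpha> k) (at 0)"
  shows "\<exists>S. ((\<lambda>\<epsilon>. s (\<theta> \<epsilon>) (\<alpha> \<epsilon>)) has_real_derivative S) (at 0) \<and>
    \<bar>S\<bar> \<le> CA * (\<bar>D\<theta>\<bar> + L2_set D\<alpha> {..<K})"
proof -
  obtain Ds D2s where C2: "C2_on (Suc K) (\<lambda>z. s (z 0) (\<lambda>k. if k < K then z (Suc k) else 0)) Ds D2s"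
    and Ds_le: "\<And>z. z \<in> dvec (Suc K) \<Longrightarrow> L2_set (Ds z) {..<Suc K} \<le> CA"
    using assms(1) unfolding A3_def by blast
  define g where "g \<epsilon> = case_nat (\<theta> \<epsilon>) (\<alpha> \<epsilon>)" for \<epsilon>
  have g_dvec: "g \<epsilon> \<in> dvec (Suc K)" for \<epsilon>
    using curve[of \<epsilon>] by (auto simp: dvec_def g_def split: nat.split)
  have "(\<lambda>k. if k < K then g \<epsilon> (Suc k) else 0) = \<alpha> \<epsilon>" for \<epsilon>
    using curve[of \<epsilon>] by (auto simp: dvec_def g_def)
  then have s_g: "s (\<theta> \<epsilon>) (\<alpha> \<epsilon>) = s (g \<epsilon> 0) (\<lambda>k. if k < K then g \<epsilon> (Suc k) else 0)" for \<epsilon>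
    by (simp add: g_def)
  have "((\<lambda>\<epsilon>. g \<epsilon> j) has_real_derivative case_nat D\<theta> D\<alpha> j) (at 0)" if "j < Suc K" for j
    using that d\<theta> d\<alpha> by (cases j) (simp_all add: g_def)
  then have "((\<lambda>\<epsilon>. s (\<theta> \<epsilon>) (\<alpha> \<epsilon>)) has_real_derivative
      (\<Sum>j<Suc K. Ds (g 0) j * case_nat D\<theta> D\<alpha> j)) (at 0)"
    unfolding s_g by (rule DERIV_gradient_chain[OF C2_on_has_gradient_at[OF C2 g_dvec] g_dvec])
  moreover have "\<bar>\<Sum>j<Suc K. Ds (g 0) j * case_nat D\<theta> D\<alpha> j\<bar> \<le> CA * (\<bar>D\<theta>\<bar> + L2_set D\<alpha> {..<K})"
    using abs_sum_mult_le_L2_set Ds_le[OF g_dvec] L2_set_case_nat_le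
    by (rule order_trans[OF _ mult_mono]) (simp_all add: A3_nonneg[OF assms(1)])
  ultimately show ?thesis by blast
qed

lemma A4_DERIV_drift:
  assumes "A4 K CA G" and "0 < d" and "k < K"
    and curve_\<theta>: "\<And>\<epsilon>. \<theta> \<epsilon> \<in> dvec d" and curve_\<alpha>: "\<And>\<epsilon>. \<alpha> \<epsilon> \<in> dvec K"
    and d\<theta>: "\<And>j. j < d \<Longrightarrow> ((\<lambda>\<epsilon>. \<theta> \<epsilon> j) has_real_derivative D\<theta> j) (at 0)"
    and d\<alpha>: "\<And>k. k < K \<Longrightarrow> ((\<lambda>\<epsilon>. \<alpha> \<epsilon> k) has_real_derivative D\<alpha> k) (at 0)"
  shows "\<exists>P. ((\<lambda>\<epsilon>. G (\<alpha> \<epsilon>) (emp d (\<theta> \<epsilon>)) k) has_real_derivative P) (at 0) \<and>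
    sqrt d * \<bar>P\<bar> \<le> CA * (L2_set D\<theta> {..<d} + sqrt d * L2_set D\<alpha> {..<K})"
proof -
  obtain DG D2G where C2: "C2_on (d + K) (\<lambda>z. G (\<lambda>k'. if k' < K then z (d + k') else 0)
      (emp d (\<lambda>j. if j < d then z j else 0)) k) DG D2G"
    and DG_le: "\<And>z. z \<in> dvec (d + K) \<Longrightarrow>
      L2_set (DG z) {d..<d + K} \<le> CA \<and> sqrt d * L2_set (DG z) {..<d} \<le> CA"
    using assms(1)[unfolded A4_def, THEN conjunct2, THEN conjunct2, rule_format, OF assms(2,3)]
    by blast
  define g where "g \<epsilon> j = (if j < d then \<theta> \<epsilon> j else \<alpha> \<epsilon> (j - d))" for \<epsilon> j
  define g' where "g' j = (if j < d then D\<theta> j else D\<alpha> (j - d))" for j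
  have g_dvec: "g \<epsilon> \<in> dvec (d + K)" for \<epsilon>
    using curve_\<alpha>[of \<epsilon>] by (auto simp: dvec_def g_def)
  have "(\<lambda>k'. if k' < K then g \<epsilon> (d + k') else 0) = \<alpha> \<epsilon>" "(\<lambda>j. if j < d then g \<epsilon> j else 0) = \<theta> \<epsilon>"
    for \<epsilon> using curve_\<theta>[of \<epsilon>] curve_\<alpha>[of \<epsilon>] by (auto simp: dvec_def g_def)
  then have G_g: "G (\<alpha> \<epsilon>) (emp d (\<theta> \<epsilon>)) k =
      G (\<lambda>k'. if k' < K then g \<epsilon> (d + k') else 0) (emp d (\<lambda>j. if j < d then g \<epsilon> j else 0)) k" for \<epsilon>
    by simp
  have "((\<lambda>\<epsilon>. g \<epsilon> j) has_real_derivative g' j) (at 0)" if "j < d + K" for j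
    using that d\<theta> d\<alpha>[of "j - d"] by (cases "j < d") (simp_all add: g_def g'_def)
  then have "((\<lambda>\<epsilon>. G (\<alpha> \<epsilon>) (emp d (\<theta> \<epsilon>)) k) has_real_derivative (\<Sum>j<d + K. DG (g 0) j * g' j)) (at 0)"
    unfolding G_g by (rule DERIV_gradient_chain[OF C2_on_has_gradient_at[OF C2 g_dvec] g_dvec])
  moreover have "sqrt d * \<bar>\<Sum>j<d + K. DG (g 0) j * g' j\<bar> \<le> CA * (L2_set D\<theta> {..<d} + sqrt d * L2_set D\<alpha> {..<K})"
  proof -
    have "sqrt d * \<bar>\<Sum>j<d + K. DG (g 0) j * g' j\<bar> \<le> sqrt d * (L2_set (DG (g 0)) {..<d} * L2_set D\<theta> {..<d}
        + L2_set (DG (g 0)) {d..<d + K} * L2_set D\<alpha> {..<K})"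
      unfolding g'_def by (intro mult_left_mono abs_sum_block_mult_le) simp
    also have "\<dots> = (sqrt d * L2_set (DG (g 0)) {..<d}) * L2_set D\<theta> {..<d}
        + L2_set (DG (g 0)) {d..<d + K} * (sqrt d * L2_set D\<alpha> {..<K})"
      by (simp add: algebra_simps)
    also have "\<dots> \<le> CA * L2_set D\<theta> {..<d} + CA * (sqrt d * L2_set D\<alpha> {..<K})"
      using DG_le[OF g_dvec] by (intro add_mono mult_right_mono) auto
    finally show ?thesis by (simp add: distrib_left)
  qed
  ultimately show ?thesis by blast
qed

lemma L2_set_gram_mult_le:
  assumes "opn R S X \<le> C" "finite R" "finite S"
  shows "L2_set (\<lambda>l. \<Sum>i\<in>R. X i l * (\<Sum>m\<in>S. X i m * w m)) S \<le> C\<^sup>2 * L2_set w S"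
proof -
  have "0 \<le> C" using assms(1) opn_nonneg[OF assms(3), of R X] by linarith
  have "L2_set (\<lambda>l. \<Sum>i\<in>R. X i l * (\<Sum>m\<in>S. X i m * w m)) S
      \<le> opn R S X * L2_set (\<lambda>i. \<Sum>m\<in>S. X i m * w m) R"
    using assms(2,3) by (rule opn_transpose_mult_le)
  also have "\<dots> \<le> C * (C * L2_set w S)"
    using assms \<open>0 \<le> C\<close> opn_mult_le[OF assms(3)]
    by (intro mult_mono order_trans[OF opn_mult_le[OF assms(3)] mult_right_mono]) auto
  finally show ?thesis by (simp add: power2_eq_square)
qed

lemma one_plus_power_le_exp:
  fixes x :: real
  assumes "0 \<le> x"
  shows "(1 + x) ^ n \<le> exp (n * x)"
  using assms by (simp add: exp_of_nat_mult power_mono exp_ge_add_one_self)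

locale perturbed_dynamics =
  fixes K :: nat and s :: "real \<Rightarrow> (nat \<Rightarrow> real) \<Rightarrow> real"
    and G :: "(nat \<Rightarrow> real) \<Rightarrow> real measure \<Rightarrow> nat \<Rightarrow> real"
    and \<beta> \<gamma> :: real and d n :: nat and X :: "nat \<Rightarrow> nat \<Rightarrow> real"
    and y \<theta>0 \<alpha>0 :: "nat \<Rightarrow> real" and b :: "nat \<Rightarrow> nat \<Rightarrow> real" and v :: "nat \<Rightarrow> real"
    and s0 :: nat and CA C0 V :: real
  assumes A3: "A3 K CA s" and A4: "A4 K CA G"
    and step_pos: "0 < \<gamma>" and dim_pos: "0 < d" and X_opn: "opn {..<n} {..<d} X \<le> C0"
    and \<theta>0_dvec: "\<theta>0 \<in> dvec d" and \<alpha>0_dvec: "\<alpha>0 \<in> dvec K"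
    and perturbation: "L2_set v {..<d} \<le> V"
begin

definition \<theta> :: "real \<Rightarrow> nat \<Rightarrow> nat \<Rightarrow> real" where
  "\<theta> \<epsilon> t = fst (dyn K s G \<beta> \<gamma> d n X y \<theta>0 \<alpha>0 b v s0 \<epsilon> t)"

definition \<alpha> :: "real \<Rightarrow> nat \<Rightarrow> nat \<Rightarrow> real" where
  "\<alpha> \<epsilon> t = snd (dyn K s G \<beta> \<gamma> d n X y \<theta>0 \<alpha>0 b v s0 \<epsilon> t)"

definition has_tangent :: "nat \<Rightarrow> (nat \<Rightarrow> real) \<Rightarrow> (nat \<Rightarrow> real) \<Rightarrow> bool" where
  "has_tangent t D\<theta> D\<alpha> \<longleftrightarrow>
    (\<forall>l<d. ((\<lambda>\<epsilon>. \<theta> \<epsilon> t l) has_real_derivative D\<theta> l) (at 0)) \<and>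
    (\<forall>k<K. ((\<lambda>\<epsilon>. \<alpha> \<epsilon> t k) has_real_derivative D\<alpha> k) (at 0))"

definition tangent_norm :: "(nat \<Rightarrow> real) \<Rightarrow> (nat \<Rightarrow> real) \<Rightarrow> real" where
  "tangent_norm D\<theta> D\<alpha> = L2_set D\<theta> {..<d} + sqrt d * L2_set D\<alpha> {..<K}"

definition L :: real where
  "L = \<bar>\<beta>\<bar> * C0\<^sup>2 + (1 + sqrt K) * CA"

lemma tangent_norm_nonneg: "0 \<le> tangent_norm D\<theta> D\<alpha>"
  by (simp add: tangent_norm_def)

lemma \<theta>_dvec: "\<theta> \<epsilon> t \<in> dvec d" and \<alpha>_dvec: "\<alpha> \<epsilon> t \<in> dvec K"
  using \<theta>0_dvec \<alpha>0_dvec by (cases t; simp add: \<theta>_def \<alpha>_def dvec_def split_beta Let_def)+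

lemma \<theta>_Suc:
  "l < d \<Longrightarrow> \<theta> \<epsilon> (Suc t) l = \<theta> \<epsilon> t l
      - \<gamma> * (\<beta> * (\<Sum>i<n. X i l * ((\<Sum>m<d. X i m * \<theta> \<epsilon> t m) - y i))
               - s (\<theta> \<epsilon> t l) (\<alpha> \<epsilon> t) - (if t = s0 then \<epsilon> * v l else 0))
      + sqrt 2 * (b (Suc t) l - b t l)"
  by (simp add: \<theta>_def \<alpha>_def split_beta Let_def)

lemma \<alpha>_Suc: "k < K \<Longrightarrow> \<alpha> \<epsilon> (Suc t) k = \<alpha> \<epsilon> t k + \<gamma> * G (\<alpha> \<epsilon> t) (emp d (\<theta> \<epsilon> t)) k"
  by (simp add: \<theta>_def \<alpha>_def split_beta Let_def)

lemma has_tangent_0: "has_tangent 0 (\<lambda>_. 0) (\<lambda>_. 0)"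
  by (simp add: has_tangent_def \<theta>_def \<alpha>_def)

lemma score_tangent:
  assumes "has_tangent t D\<theta> D\<alpha>"
  shows "\<exists>S. (\<forall>l<d. ((\<lambda>\<epsilon>. s (\<theta> \<epsilon> t l) (\<alpha> \<epsilon> t)) has_real_derivative S l) (at 0)) \<and>
    L2_set S {..<d} \<le> CA * tangent_norm D\<theta> D\<alpha>"
proof -
  have d\<theta>: "\<And>l. l < d \<Longrightarrow> ((\<lambda>\<epsilon>. \<theta> \<epsilon> t l) has_real_derivative D\<theta> l) (at 0)"
    and d\<alpha>: "\<And>k. k < K \<Longrightarrow> ((\<lambda>\<epsilon>. \<alpha> \<epsilon> t k) has_real_derivative D\<alpha> k) (at 0)"
    using assms by (auto simp: has_tangent_def)
  have "\<forall>l\<in>{..<d}. \<exists>S. ((\<lambda>\<epsilon>. s (\<theta> \<epsilon> t l) (\<alpha> \<epsilon> t)) has_real_derivative S) (at 0) \<and>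
      \<bar>S\<bar> \<le> CA * \<bar>D\<theta> l\<bar> + CA * L2_set D\<alpha> {..<K}"
    using A3_DERIV_score[OF A3 \<alpha>_dvec d\<theta> d\<alpha>] by (simp add: distrib_left)
  from bchoice[OF this] obtain S
    where dS: "\<forall>l<d. ((\<lambda>\<epsilon>. s (\<theta> \<epsilon> t l) (\<alpha> \<epsilon> t)) has_real_derivative S l) (at 0)"
      and S_le: "\<And>l. l < d \<Longrightarrow> \<bar>S l\<bar> \<le> CA * \<bar>D\<theta> l\<bar> + CA * L2_set D\<alpha> {..<K}"
    by blast
  have "L2_set S {..<d} \<le> L2_set (\<lambda>l. CA * \<bar>D\<theta> l\<bar> + CA * L2_set D\<alpha> {..<K}) {..<d}"
    using S_le A3_nonneg[OF A3] by (subst L2_set_abs[symmetric], intro L2_set_mono) auto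
  also have "\<dots> \<le> CA * L2_set D\<theta> {..<d} + CA * (sqrt d * L2_set D\<alpha> {..<K})"
    using A3_nonneg[OF A3]
      L2_set_triangle_ineq[of "\<lambda>l. CA * \<bar>D\<theta> l\<bar>" "\<lambda>l. CA * L2_set D\<alpha> {..<K}" "{..<d}"]
    by (simp add: L2_set_cmult L2_set_constant mult_ac)
  finally show ?thesis
    using dS by (auto simp: tangent_norm_def distrib_left)
qed

lemma \<theta>_tangent_Suc:
  assumes "has_tangent t D\<theta> D\<alpha>"
  shows "\<exists>W. (\<forall>l<d. ((\<lambda>\<epsilon>. \<theta> \<epsilon> (Suc t) l) has_real_derivative D\<theta> l + \<gamma> * W l) (at 0)) \<and>
    L2_set W {..<d} \<le> \<bar>\<beta>\<bar> * C0\<^sup>2 * L2_set D\<theta> {..<d} + CA * tangent_norm D\<theta> D\<alpha>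
      + (if t = s0 then V else 0)"
proof -
  obtain S where dS: "\<forall>l<d. ((\<lambda>\<epsilon>. s (\<theta> \<epsilon> t l) (\<alpha> \<epsilon> t)) has_real_derivative S l) (at 0)"
    and S_le: "L2_set S {..<d} \<le> CA * tangent_norm D\<theta> D\<alpha>"
    using score_tangent[OF assms] by blast
  define u where "u l = (\<Sum>i<n. X i l * (\<Sum>m<d. X i m * D\<theta> m))" for l
  define c where "c = (if t = s0 then 1 else 0 :: real)"
  define W where "W l = S l + ((- \<beta>) * u l + c * v l)" for l
  have "((\<lambda>\<epsilon>. \<theta> \<epsilon> (Suc t) l) has_real_derivative D\<theta> l + \<gamma> * W l) (at 0)" if "l < d" for l
  proof -
    have perturbation_deriv: "((\<lambda>\<epsilon>. if t = s0 then \<epsilon> * v l else 0) has_real_derivative c * v l) (at 0)"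
      by (cases "t = s0") (auto intro!: derivative_eq_intros simp: c_def)
    have "((\<lambda>\<epsilon>. \<theta> \<epsilon> (Suc t) l) has_real_derivative
        D\<theta> l - \<gamma> * (\<beta> * (\<Sum>i<n. X i l * ((\<Sum>m<d. X i m * D\<theta> m) - 0)) - S l - c * v l)
        + sqrt 2 * (0 - 0)) (at 0)"
      unfolding \<theta>_Suc[OF that] using assms dS that
      by (intro DERIV_add DERIV_diff DERIV_cmult DERIV_sum DERIV_const perturbation_deriv)
        (auto simp: has_tangent_def)
    then show ?thesis by (simp add: W_def u_def algebra_simps)
  qed
  moreover have "L2_set W {..<d} \<le> \<bar>\<beta>\<bar> * C0\<^sup>2 * L2_set D\<theta> {..<d} + CA * tangent_norm D\<theta> D\<alpha>
      + (if t = s0 then V else 0)"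
  proof -
    have u_le: "L2_set u {..<d} \<le> C0\<^sup>2 * L2_set D\<theta> {..<d}"
      unfolding u_def using X_opn by (rule L2_set_gram_mult_le) simp_all
    have "L2_set W {..<d} \<le> L2_set S {..<d} + L2_set (\<lambda>l. (- \<beta>) * u l + c * v l) {..<d}"
      unfolding W_def by (rule L2_set_triangle_ineq)
    also have "\<dots> \<le> L2_set S {..<d} + (L2_set (\<lambda>l. (- \<beta>) * u l) {..<d} + L2_set (\<lambda>l. c * v l) {..<d})"
      by (rule add_left_mono[OF L2_set_triangle_ineq])
    finally have "L2_set W {..<d} \<le> L2_set S {..<d} + (\<bar>\<beta>\<bar> * L2_set u {..<d} + \<bar>c\<bar> * L2_set v {..<d})"
      unfolding L2_set_cmult by simp
    then show ?thesis
      using S_le perturbation mult_left_mono[OF u_le, of "\<bar>\<beta>\<bar>"]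
      by (auto simp: c_def algebra_simps)
  qed
  ultimately show ?thesis by blast
qed

lemma \<alpha>_tangent_Suc:
  assumes "has_tangent t D\<theta> D\<alpha>"
  shows "\<exists>P. (\<forall>k<K. ((\<lambda>\<epsilon>. \<alpha> \<epsilon> (Suc t) k) has_real_derivative D\<alpha> k + \<gamma> * P k) (at 0)) \<and>
    sqrt d * L2_set P {..<K} \<le> sqrt K * CA * tangent_norm D\<theta> D\<alpha>"
proof -
  have d\<theta>: "\<And>l. l < d \<Longrightarrow> ((\<lambda>\<epsilon>. \<theta> \<epsilon> t l) has_real_derivative D\<theta> l) (at 0)"
    and d\<alpha>: "\<And>k. k < K \<Longrightarrow> ((\<lambda>\<epsilon>. \<alpha> \<epsilon> t k) has_real_derivative D\<alpha> k) (at 0)"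
    using assms by (auto simp: has_tangent_def)
  have "\<forall>k\<in>{..<K}. \<exists>P. ((\<lambda>\<epsilon>. G (\<alpha> \<epsilon> t) (emp d (\<theta> \<epsilon> t)) k) has_real_derivative P) (at 0) \<and>
      sqrt d * \<bar>P\<bar> \<le> CA * tangent_norm D\<theta> D\<alpha>"
    unfolding tangent_norm_def using A4_DERIV_drift[OF A4 dim_pos _ \<theta>_dvec \<alpha>_dvec d\<theta> d\<alpha>] by blast
  from bchoice[OF this] obtain P
    where dP: "\<And>k. k < K \<Longrightarrow> ((\<lambda>\<epsilon>. G (\<alpha> \<epsilon> t) (emp d (\<theta> \<epsilon> t)) k) has_real_derivative P k) (at 0)"
      and P_le: "\<And>k. k < K \<Longrightarrow> sqrt d * \<bar>P k\<bar> \<le> CA * tangent_norm D\<theta> D\<alpha>"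
    by blast
  have "((\<lambda>\<epsilon>. \<alpha> \<epsilon> (Suc t) k) has_real_derivative D\<alpha> k + \<gamma> * P k) (at 0)" if "k < K" for k
    unfolding \<alpha>_Suc[OF that] using that by (intro DERIV_add DERIV_cmult dP d\<alpha>)
  moreover have "sqrt d * L2_set P {..<K} \<le> sqrt K * CA * tangent_norm D\<theta> D\<alpha>"
  proof -
    have "L2_set (\<lambda>k. sqrt d * P k) {..<K} \<le> sqrt K * (CA * tangent_norm D\<theta> D\<alpha>)"
      using L2_set_le_const[of "{..<K}" "\<lambda>k. sqrt d * P k" "CA * tangent_norm D\<theta> D\<alpha>"] P_le
        A3_nonneg[OF A3] tangent_norm_nonneg
      by (simp add: abs_mult)
    then show ?thesis by (simp add: L2_set_cmult mult.assoc)
  qed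
  ultimately show ?thesis by blast
qed

lemma has_tangent_Suc:
  assumes "has_tangent t D\<theta> D\<alpha>"
  shows "\<exists>D\<theta>' D\<alpha>'. has_tangent (Suc t) D\<theta>' D\<alpha>' \<and>
    tangent_norm D\<theta>' D\<alpha>' \<le> (1 + \<gamma> * L) * tangent_norm D\<theta> D\<alpha> + \<gamma> * (if t = s0 then V else 0)"
proof -
  obtain W where dW: "\<forall>l<d. ((\<lambda>\<epsilon>. \<theta> \<epsilon> (Suc t) l) has_real_derivative D\<theta> l + \<gamma> * W l) (at 0)"
    and W_le: "L2_set W {..<d} \<le> \<bar>\<beta>\<bar> * C0\<^sup>2 * L2_set D\<theta> {..<d} + CA * tangent_norm D\<theta> D\<alpha>
      + (if t = s0 then V else 0)"
    using \<theta>_tangent_Suc[OF assms] by blast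
  obtain P where dP: "\<forall>k<K. ((\<lambda>\<epsilon>. \<alpha> \<epsilon> (Suc t) k) has_real_derivative D\<alpha> k + \<gamma> * P k) (at 0)"
    and P_le: "sqrt d * L2_set P {..<K} \<le> sqrt K * CA * tangent_norm D\<theta> D\<alpha>"
    using \<alpha>_tangent_Suc[OF assms] by blast
  let ?D\<theta> = "\<lambda>l. D\<theta> l + \<gamma> * W l" and ?D\<alpha> = "\<lambda>k. D\<alpha> k + \<gamma> * P k"
  have "has_tangent (Suc t) ?D\<theta> ?D\<alpha>"
    using dW dP by (simp add: has_tangent_def)
  moreover have norm_step: "tangent_norm ?D\<theta> ?D\<alpha> \<le> tangent_norm D\<theta> D\<alpha> + \<gamma> * (L2_set W {..<d} + sqrt d * L2_set P {..<K})"
  proof -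
    have "L2_set ?D\<theta> {..<d} \<le> L2_set D\<theta> {..<d} + \<gamma> * L2_set W {..<d}"
      using L2_set_triangle_ineq[of D\<theta> "\<lambda>l. \<gamma> * W l"] step_pos by (simp add: L2_set_cmult)
    moreover have "L2_set ?D\<alpha> {..<K} \<le> L2_set D\<alpha> {..<K} + \<gamma> * L2_set P {..<K}"
      using L2_set_triangle_ineq[of D\<alpha> "\<lambda>k. \<gamma> * P k"] step_pos by (simp add: L2_set_cmult)
    ultimately show ?thesis
      unfolding tangent_norm_def by (auto simp: algebra_simps dest: mult_left_mono[of _ _ "sqrt d"])
  qed
  moreover have increment: "L2_set W {..<d} + sqrt d * L2_set P {..<K} \<le> L * tangent_norm D\<theta> D\<alpha> + (if t = s0 then V else 0)"
  proof -
    have "L2_set D\<theta> {..<d} \<le> tangent_norm D\<theta> D\<alpha>" by (simp add: tangent_norm_def)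
    then have "\<bar>\<beta>\<bar> * C0\<^sup>2 * L2_set D\<theta> {..<d} \<le> \<bar>\<beta>\<bar> * C0\<^sup>2 * tangent_norm D\<theta> D\<alpha>"
      by (rule mult_left_mono) simp
    moreover have "L * tangent_norm D\<theta> D\<alpha> = \<bar>\<beta>\<bar> * C0\<^sup>2 * tangent_norm D\<theta> D\<alpha>
        + CA * tangent_norm D\<theta> D\<alpha> + sqrt K * CA * tangent_norm D\<theta> D\<alpha>"
      by (simp add: L_def algebra_simps)
    ultimately show ?thesis using W_le P_le by linarith
  qed
  moreover have "\<gamma> * (L2_set W {..<d} + sqrt d * L2_set P {..<K}) \<le> \<gamma> * (L * tangent_norm D\<theta> D\<alpha> + (if t = s0 then V else 0))"
    using step_pos by (intro mult_left_mono increment) simp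
  ultimately show ?thesis
    by (intro exI[of _ ?D\<theta>] exI[of _ ?D\<alpha>]) (simp add: algebra_simps)
qed

lemma tangent_growth:
  "\<exists>D\<theta> D\<alpha>. has_tangent t D\<theta> D\<alpha> \<and>
    tangent_norm D\<theta> D\<alpha> \<le> (if s0 < t then \<gamma> * V * (1 + \<gamma> * L) ^ t else 0)"
proof (induction t)
  case 0
  show ?case
    using has_tangent_0 by (intro exI[of _ "\<lambda>_. 0"]) (simp add: tangent_norm_def L2_set_def)
next
  case (Suc t)
  let ?q = "1 + \<gamma> * L"
  have q: "1 \<le> ?q" using step_pos A3_nonneg[OF A3] by (simp add: L_def)
  have V: "0 \<le> V" using perturbation L2_set_nonneg[of v "{..<d}"] by linarith
  obtain D\<theta> D\<alpha> where "has_tangent t D\<theta> D\<alpha>"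
    and IH: "tangent_norm D\<theta> D\<alpha> \<le> (if s0 < t then \<gamma> * V * ?q ^ t else 0)"
    using Suc.IH by blast
  then obtain D\<theta>' D\<alpha>' where "has_tangent (Suc t) D\<theta>' D\<alpha>'"
    and step: "tangent_norm D\<theta>' D\<alpha>' \<le> ?q * tangent_norm D\<theta> D\<alpha> + \<gamma> * (if t = s0 then V else 0)"
    using has_tangent_Suc by blast
  moreover have "?q * tangent_norm D\<theta> D\<alpha> + \<gamma> * (if t = s0 then V else 0)
      \<le> (if s0 < Suc t then \<gamma> * V * ?q ^ Suc t else 0)"
  proof -
    have "?q * tangent_norm D\<theta> D\<alpha> \<le> ?q * (if s0 < t then \<gamma> * V * ?q ^ t else 0)"
      using IH q by (intro mult_left_mono) auto
    then have "?q * tangent_norm D\<theta> D\<alpha> \<le> (if s0 < t then \<gamma> * V * ?q ^ Suc t else 0)"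
      by (simp add: mult_ac split: if_splits)
    moreover have "\<gamma> * V \<le> \<gamma> * V * ?q ^ Suc t"
      using mult_left_mono[OF one_le_power[OF q, of "Suc t"], of "\<gamma> * V"] V step_pos by simp
    ultimately show ?thesis by auto
  qed
  ultimately show ?case by (meson order_trans)
qed

lemma tangent_bound:
  assumes "real t \<le> T / \<gamma>"
  shows "\<exists>D\<theta> D\<alpha>. has_tangent t D\<theta> D\<alpha> \<and> tangent_norm D\<theta> D\<alpha> \<le> V * exp (L * T) * \<gamma>"
proof -
  have "0 \<le> L" using A3_nonneg[OF A3] by (simp add: L_def)
  have V: "0 \<le> V" using perturbation L2_set_nonneg[of v "{..<d}"] by linarith
  have "(1 + \<gamma> * L) ^ t \<le> exp (t * (\<gamma> * L))"
    using \<open>0 \<le> L\<close> step_pos by (intro one_plus_power_le_exp) simp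
  also have "\<dots> \<le> exp (L * T)"
  proof -
    have "real t * \<gamma> \<le> T" using assms step_pos by (simp add: field_simps)
    from mult_right_mono[OF this \<open>0 \<le> L\<close>] show ?thesis by (simp add: mult_ac)
  qed
  finally have "(if s0 < t then \<gamma> * V * (1 + \<gamma> * L) ^ t else 0) \<le> V * exp (L * T) * \<gamma>"
    using V step_pos by (auto simp: mult_ac intro: mult_left_mono)
  then show ?thesis using tangent_growth[of t] by (meson order_trans)
qed

end

lemma dyn_perturbation_derivative_bound:
  assumes "A3 K CA s" "A4 K CA G" "0 < \<gamma>" "0 < d" "opn {..<n} {..<d} X \<le> C0"
    and "\<theta>0 \<in> dvec d" "\<alpha>0 \<in> dvec K" "L2_set v {..<d} \<le> V" "real t \<le> T / \<gamma>"
  shows "\<exists>D\<theta> D\<alpha>.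
    (\<forall>l<d. ((\<lambda>\<epsilon>. fst (dyn K s G \<beta> \<gamma> d n X y \<theta>0 \<alpha>0 b v s0 \<epsilon> t) l) has_real_derivative D\<theta> l) (at 0)) \<and>
    (\<forall>k<K. ((\<lambda>\<epsilon>. snd (dyn K s G \<beta> \<gamma> d n X y \<theta>0 \<alpha>0 b v s0 \<epsilon> t) k) has_real_derivative D\<alpha> k) (at 0)) \<and>
    L2_set D\<theta> {..<d} + sqrt d * L2_set D\<alpha> {..<K}
      \<le> V * exp ((\<bar>\<beta>\<bar> * C0\<^sup>2 + (1 + sqrt K) * \<bar>CA\<bar>) * T) * \<gamma>"
proof -
  interpret perturbed_dynamics K s G \<beta> \<gamma> d n X y \<theta>0 \<alpha>0 b v s0 CA C0 V
    using assms(1-8) by unfold_locales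
  have "\<bar>CA\<bar> = CA" using A3_nonneg[OF assms(1)] by simp
  then show ?thesis
    using tangent_bound[OF assms(9)] unfolding has_tangent_def tangent_norm_def \<theta>_def \<alpha>_def L_def
    by simp
qed

theorem mainTheorem13:
  fixes T C0 \<beta> \<delta> CA :: real and K :: nat
  assumes "T > 0" and "C0 > 0"
  shows "\<exists>C>0. \<forall>s G. A3 K CA s \<longrightarrow> A4 K CA G \<longrightarrow>
    (\<forall>\<gamma>>0. \<forall>d n X y \<theta>0 \<alpha>0 b.
       d > 0 \<longrightarrow> real n \<le> \<delta> * real d \<longrightarrow>
       opn {..<n} {..<d} X \<le> C0 \<longrightarrow>
       \<theta>0 \<in> dvec d \<longrightarrow> \<alpha>0 \<in> dvec K \<longrightarrow> (\<forall>j. b 0 j = 0) \<longrightarrow>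
       (\<forall>s0 t j. s0 \<le> t \<longrightarrow> real t \<le> T / \<gamma> \<longrightarrow> j < d \<longrightarrow>
          (\<exists>D\<theta> D\<alpha>.
             (\<forall>l<d. ((\<lambda>\<epsilon>. fst (dyn K s G \<beta> \<gamma> d n X y \<theta>0 \<alpha>0 b (\<lambda>l'. if l' = j then 1 else 0) s0 \<epsilon> t) l)
                        has_real_derivative D\<theta> l) (at 0)) \<and>
             (\<forall>k<K. ((\<lambda>\<epsilon>. snd (dyn K s G \<beta> \<gamma> d n X y \<theta>0 \<alpha>0 b (\<lambda>l'. if l' = j then 1 else 0) s0 \<epsilon> t) k)
                        has_real_derivative D\<alpha> k) (at 0)) \<and>
             L2_set D\<theta> {..<d} + sqrt (real d) * L2_set D\<alpha> {..<K} \<le> C * \<gamma>)) \<and>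
       (\<forall>s0 t i. s0 \<le> t \<longrightarrow> real t \<le> T / \<gamma> \<longrightarrow> i < n \<longrightarrow>
          (\<exists>D\<theta> D\<alpha>.
             (\<forall>l<d. ((\<lambda>\<epsilon>. fst (dyn K s G \<beta> \<gamma> d n X y \<theta>0 \<alpha>0 b (\<lambda>l'. X i l') s0 \<epsilon> t) l)
                        has_real_derivative D\<theta> l) (at 0)) \<and>
             (\<forall>k<K. ((\<lambda>\<epsilon>. snd (dyn K s G \<beta> \<gamma> d n X y \<theta>0 \<alpha>0 b (\<lambda>l'. X i l') s0 \<epsilon> t) k)
                        has_real_derivative D\<alpha> k) (at 0)) \<and>
             L2_set D\<theta> {..<d} + sqrt (real d) * L2_set D\<alpha> {..<K} \<le> C * \<gamma>)))"
proof -
  define C where "C = (1 + C0) * exp ((\<bar>\<beta>\<bar> * C0\<^sup>2 + (1 + sqrt K) * \<bar>CA\<bar>) * T)"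
  have "C > 0" using \<open>C0 > 0\<close> by (simp add: C_def)
  have unit: "L2_set (\<lambda>l. if l = j then 1 else 0) {..<d} \<le> 1 + C0" if "j < d" for j d :: nat
    using L2_set_unit_vector[of "{..<d}" j] that \<open>C0 > 0\<close> by simp
  have row: "L2_set (\<lambda>l. X i l) {..<d} \<le> 1 + C0" if "i < n" "opn {..<n} {..<d} X \<le> C0" for i n d X
    using L2_set_row_le_opn[of i "{..<n}" "{..<d}" X] that by simp
  show ?thesis
    using \<open>C > 0\<close> unfolding C_def
    by (blast intro: dyn_perturbation_derivative_bound unit row)
qed

end
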